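(* Let $H=\mathbb R^d$, $d\ge1$. Let $b:H\to H$ be continuously differentiable and assume there exist $\omega>0$, $a\ge0$, $K>0$, $N\in\mathbb N$ such that for all $x\in H$: $\langle b(x),x\rangle\le-\omega|x|^2+a$ and $|b(x)|+\|b'(x)\|\le K(1+|x|^{2N})$. Let $\nu$ be the invariant probability measure of the transition semigroup of $dX(t)=b(X(t))\,dt+dW(t)$. Let $(e_1,\dots,e_d)$ be an orthonormal basis of $H$, and for $z\in H$ let $v_z$ be the function in $L^1(H,\nu)$ with $\int_H\langle D\varphi,z\rangle d\nu=\int_Hv_z\varphi\,d\nu$ for all $\varphi\in C^1_b(H)$. Fix $p>1$ and $q=\frac p{p-1}$, and let $D^*$ be the adjoint of the gradient as defined below. Let $F(x)=\sum_{h=1}^d f_h(x)e_h$ with $f_h\in C^1_b(H)$, $h=1,\dots,d$. Then $F$ belongs to the domain of $D^*$ and $$D^*(F)=-\operatorname{div}F+\sum_{h=1}^d v_{e_h}f_h.$$ Moreover, for every $\varphi\in C^2_b(H)$, $$-\tfrac12\,D^*(D\varphi)=\tfrac12\,\Delta\varphi-\tfrac12\sum_{h=1}^d v_{e_h}\,D_h\varphi,$$ where $D_h\varphi=\langle D\varphi,e_h\rangle$.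
   Context: $W$ is a standard $\mathbb R^d$-valued Brownian motion; $\nu$ is the (unique) invariant probability measure of $P_t\varphi(x)=\mathbb E[\varphi(X(t,x))]$. The functions $v_z$ exist and lie in $L^r(H,\nu)$ for all $r\in[1,\infty)$. Adjoint: $F\in L^q(H,\nu;H)$ belongs to the domain of $D^*$ iff there exists $g\in L^q(H,\nu)$ with $\int_H\langle D\varphi,F\rangle\,d\nu=\int_H\varphi\,g\,d\nu$ for all $\varphi\in C^1_b(H)$ (equivalently, iff $|\int_H\langle D\varphi,F\rangle d\nu|\le K_F\|\varphi\|_{L^p(H,\nu)}$ for all $\varphi\in C^1_b(H)$); then $D^*(F)=g$. This is the adjoint of the closure in $L^p(H,\nu)$ of the gradient $D:C^1_b(H)\to L^p(H,\nu;H)$. $C^k_b(H)$ denotes bounded functions with bounded continuous derivatives up to order $k$. *)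

theory Defs
  imports "HOL-Probability.Probability"
begin

definition grad :: "('a::euclidean_space \<Rightarrow> real) \<Rightarrow> 'a \<Rightarrow> 'a" where
  "grad \<phi> x = (\<Sum>i\<in>Basis. frechet_derivative \<phi> (at x) i *\<^sub>R i)"

definition divergence :: "('a::euclidean_space \<Rightarrow> 'a) \<Rightarrow> 'a \<Rightarrow> real" where
  "divergence F x = (\<Sum>i\<in>Basis. frechet_derivative F (at x) i \<bullet> i)"

definition laplacian :: "('a::euclidean_space \<Rightarrow> real) \<Rightarrow> 'a \<Rightarrow> real" where
  "laplacian \<phi> = divergence (grad \<phi>)"

definition C1b :: "('a::euclidean_space \<Rightarrow> real) \<Rightarrow> bool" where
  "C1b \<phi> \<longleftrightarrow> bounded (range \<phi>) \<and> (\<forall>x. \<phi> differentiable (at x))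
      \<and> continuous_on UNIV (grad \<phi>) \<and> bounded (range (grad \<phi>))"

definition C2b :: "('a::euclidean_space \<Rightarrow> real) \<Rightarrow> bool" where
  "C2b \<phi> \<longleftrightarrow> C1b \<phi> \<and> (\<forall>i\<in>Basis. C1b (\<lambda>x. grad \<phi> x \<bullet> i))"

definition in_Lq :: "'b measure \<Rightarrow> real \<Rightarrow> ('b \<Rightarrow> 'c::{banach,second_countable_topology}) \<Rightarrow> bool" where
  "in_Lq \<nu> q f \<longleftrightarrow> f \<in> borel_measurable \<nu> \<and> integrable \<nu> (\<lambda>x. norm (f x) powr q)"

text \<open>\<open>adjoint_grad \<nu> q F g\<close>: F belongs to the domain of D^* (adjoint in L^q of the
  closure in L^p of D : C^1_b(H) \<rightarrow> L^p(H,\<nu>;H)) and D^*(F) = g (as elements of L^q).\<close>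
definition adjoint_grad :: "'a::euclidean_space measure \<Rightarrow> real \<Rightarrow> ('a \<Rightarrow> 'a) \<Rightarrow> ('a \<Rightarrow> real) \<Rightarrow> bool" where
  "adjoint_grad \<nu> q F g \<longleftrightarrow> in_Lq \<nu> q F \<and> in_Lq \<nu> q g \<and>
     (\<forall>\<phi>. C1b \<phi> \<longrightarrow> (\<integral>x. grad \<phi> x \<bullet> F x \<partial>\<nu>) = (\<integral>x. \<phi> x * g x \<partial>\<nu>))"

text \<open>Standard H-valued Brownian motion on the probability space M (continuous paths,
  W 0 = 0, independent increments, W t - W s ~ N(0,(t-s) I); the Gaussian law of the
  increment is expressed by Cramer--Wold: every direction u \<noteq> 0 gives N(0,(t-s)|u|^2)).\<close>
definition brownian_motion :: "'w measure \<Rightarrow> (real \<Rightarrow> 'w \<Rightarrow> 'a::euclidean_space) \<Rightarrow> bool" where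
  "brownian_motion M W \<longleftrightarrow> prob_space M \<and>
     (\<forall>t. W t \<in> borel_measurable M) \<and>
     (\<forall>\<omega>\<in>space M. W 0 \<omega> = 0 \<and> continuous_on {0..} (\<lambda>t. W t \<omega>)) \<and>
     (\<forall>(n::nat) (t::nat \<Rightarrow> real). 0 \<le> t 0 \<and> (\<forall>i<n. t i < t (Suc i)) \<longrightarrow>
        prob_space.indep_vars M (\<lambda>_. borel) (\<lambda>i \<omega>. W (t (Suc i)) \<omega> - W (t i) \<omega>) {..<n}) \<and>
     (\<forall>s t u. 0 \<le> s \<and> s < t \<and> u \<noteq> 0 \<longrightarrow>
        distributed M lborel (\<lambda>\<omega>. u \<bullet> (W t \<omega> - W s \<omega>)) (normal_density 0 (sqrt (t - s) * norm u)))"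

text \<open>X x t \<omega> is the (pathwise, since the noise is additive) solution of
  X(t) = x + \<integral>_0^t b(X(s)) ds + W(t).\<close>
definition sde_solution :: "'w measure \<Rightarrow> ('a::euclidean_space \<Rightarrow> 'a) \<Rightarrow> (real \<Rightarrow> 'w \<Rightarrow> 'a)
    \<Rightarrow> ('a \<Rightarrow> real \<Rightarrow> 'w \<Rightarrow> 'a) \<Rightarrow> bool" where
  "sde_solution M b W X \<longleftrightarrow>
     (\<forall>x t. X x t \<in> borel_measurable M) \<and>
     (\<forall>x. \<forall>\<omega>\<in>space M. continuous_on {0..} (\<lambda>t. X x t \<omega>) \<and>
        (\<forall>t\<ge>0. X x t \<omega> = x + integral {0..t} (\<lambda>s. b (X x s \<omega>)) + W t \<omega>))"

definition transition :: "'w measure \<Rightarrow> ('a \<Rightarrow> real \<Rightarrow> 'w \<Rightarrow> 'a) \<Rightarrow> real \<Rightarrow> ('a \<Rightarrow> real) \<Rightarrow> 'a \<Rightarrow> real" where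
  "transition M X t \<phi> x = (\<integral>\<omega>. \<phi> (X x t \<omega>) \<partial>M)"

definition invariant_measure :: "'w measure \<Rightarrow> ('a::euclidean_space \<Rightarrow> real \<Rightarrow> 'w \<Rightarrow> 'a) \<Rightarrow> 'a measure \<Rightarrow> bool" where
  "invariant_measure M X \<nu> \<longleftrightarrow> prob_space \<nu> \<and> sets \<nu> = sets borel \<and>
     (\<forall>t\<ge>0. \<forall>\<phi>. continuous_on UNIV \<phi> \<and> bounded (range \<phi>) \<longrightarrow>
        (\<integral>x. transition M X t \<phi> x \<partial>\<nu>) = (\<integral>x. \<phi> x \<partial>\<nu>))"

end

theory Submission
  imports Defs
begin

text \<open>
  For a field \<open>F = \<Sum>\<^sub>h f\<^sub>h e\<^sub>h\<close> with \<open>f\<^sub>h \<in> C\<^sup>1\<^sub>b\<close> and a test function \<open>\<phi> \<in> C\<^sup>1\<^sub>b\<close>, the product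
  \<open>\<phi> f\<^sub>h\<close> is again in \<open>C\<^sup>1\<^sub>b\<close>, so the defining identity of \<open>v\<^sub>e\<^sub>h\<close> applied to it together
  with the product rule gives
  \<open>\<integral> f\<^sub>h D\<^sub>h\<phi> d\<nu> = \<integral> \<phi> (v\<^sub>e\<^sub>h f\<^sub>h - D\<^sub>h f\<^sub>h) d\<nu>\<close>.
  Summing over \<open>h\<close> yields \<open>D\<^sup>*F = -div F + \<Sum>\<^sub>h v\<^sub>e\<^sub>h f\<^sub>h\<close>; the right-hand side lies in \<open>L\<^sup>q\<close>
  because the \<open>v\<^sub>z\<close> lie in every \<open>L\<^sup>r\<close> and all other factors are bounded.
  For \<open>\<phi> \<in> C\<^sup>2\<^sub>b\<close> the gradient is such a field, with \<open>f\<^sub>h = D\<^sub>h\<phi>\<close> and \<open>div D\<phi> = \<Delta>\<phi>\<close>.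
  The dissipative drift and the SDE enter only through the measure \<open>\<nu>\<close> and the functions
  \<open>v\<^sub>z\<close>, whose existence and integrability are hypotheses.
\<close>

lemma grad_inner_eq:
  assumes "(\<psi> has_derivative D) (at x)"
  shows "grad \<psi> x \<bullet> z = D z"
proof -
  have lin: "linear D" using has_derivative_linear[OF assms] .
  have "grad \<psi> x \<bullet> z = (\<Sum>i\<in>Basis. D i * (i \<bullet> z))"
    using frechet_derivative_at[OF assms] by (simp add: grad_def inner_sum_left)
  also have "\<dots> = D (\<Sum>i\<in>Basis. (z \<bullet> i) *\<^sub>R i)"
    by (simp add: linear_sum[OF lin] linear_scale[OF lin] inner_commute mult.commute)
  also have "\<dots> = D z" by (simp add: euclidean_representation)
  finally show ?thesis .
qed

lemma C1b_has_derivative: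
  assumes "C1b \<psi>"
  shows "(\<psi> has_derivative (\<lambda>z. grad \<psi> x \<bullet> z)) (at x)"
proof -
  have d: "(\<psi> has_derivative frechet_derivative \<psi> (at x)) (at x)"
    using assms frechet_derivative_works unfolding C1b_def by blast
  moreover have "frechet_derivative \<psi> (at x) = (\<lambda>z. grad \<psi> x \<bullet> z)"
    using grad_inner_eq[OF d] by auto
  ultimately show ?thesis by simp
qed

lemma C1b_continuous_on: "C1b \<psi> \<Longrightarrow> continuous_on UNIV \<psi>"
  unfolding C1b_def
  by (meson differentiable_at_imp_differentiable_on differentiable_imp_continuous_on)

lemma C1b_bounded: "C1b \<psi> \<Longrightarrow> \<exists>B. \<forall>x. \<bar>\<psi> x\<bar> \<le> B"
  unfolding C1b_def bounded_iff by fastforce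

lemma C1b_grad_bounded: "C1b \<psi> \<Longrightarrow> \<exists>B. \<forall>x. norm (grad \<psi> x) \<le> B"
  unfolding C1b_def bounded_iff by blast

lemma C1bI:
  assumes "\<And>x. (\<psi> has_derivative (\<lambda>z. G x \<bullet> z)) (at x)"
    and "continuous_on UNIV G" and "\<And>x. norm (G x) \<le> B" and "\<And>x. \<bar>\<psi> x\<bar> \<le> C"
  shows "C1b \<psi>" and "grad \<psi> = G"
proof -
  have "grad \<psi> x \<bullet> z = G x \<bullet> z" for x z using grad_inner_eq[OF assms(1)] by simp
  then show grad: "grad \<psi> = G" by (metis euclidean_eqI ext)
  show "C1b \<psi>"
    unfolding C1b_def grad bounded_iff using assms by (auto simp: differentiable_def)
qed

lemma C1b_const: "C1b (\<lambda>x. c)"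
  by (rule C1bI(1)[where G="\<lambda>x. 0" and B=0 and C="\<bar>c\<bar>"]) auto

lemma C1b_mult:
  assumes "C1b \<phi>" "C1b \<psi>"
  shows "C1b (\<lambda>x. \<phi> x * \<psi> x)"
    and "grad (\<lambda>x. \<phi> x * \<psi> x) = (\<lambda>x. \<phi> x *\<^sub>R grad \<psi> x + \<psi> x *\<^sub>R grad \<phi> x)"
proof -
  obtain B1 B2 G1 G2 where B1: "\<And>x. \<bar>\<phi> x\<bar> \<le> B1" and B2: "\<And>x. \<bar>\<psi> x\<bar> \<le> B2"
    and G1: "\<And>x. norm (grad \<phi> x) \<le> G1" and G2: "\<And>x. norm (grad \<psi> x) \<le> G2"
    using assms C1b_bounded C1b_grad_bounded by metis
  have "((\<lambda>x. \<phi> x * \<psi> x) has_derivative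
          (\<lambda>z. \<phi> x * (grad \<psi> x \<bullet> z) + (grad \<phi> x \<bullet> z) * \<psi> x)) (at x)" for x
    by (rule has_derivative_mult[OF C1b_has_derivative[OF assms(1)] C1b_has_derivative[OF assms(2)]])
  then have deriv: "((\<lambda>x. \<phi> x * \<psi> x) has_derivative
          (\<lambda>z. (\<phi> x *\<^sub>R grad \<psi> x + \<psi> x *\<^sub>R grad \<phi> x) \<bullet> z)) (at x)" for x
    by (simp add: algebra_simps)
  have cont: "continuous_on UNIV (\<lambda>x. \<phi> x *\<^sub>R grad \<psi> x + \<psi> x *\<^sub>R grad \<phi> x)"
    using assms C1b_continuous_on unfolding C1b_def by (intro continuous_intros) auto
  have "norm (\<phi> x *\<^sub>R grad \<psi> x + \<psi> x *\<^sub>R grad \<phi> x)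
      \<le> \<bar>\<phi> x\<bar> * norm (grad \<psi> x) + \<bar>\<psi> x\<bar> * norm (grad \<phi> x)" for x
    by (metis norm_scaleR norm_triangle_ineq)
  also have "\<dots> x \<le> B1 * G2 + B2 * G1" for x
    by (intro add_mono mult_mono B1 B2 G1 G2)
      (auto intro: order_trans[OF abs_ge_zero B1] order_trans[OF abs_ge_zero B2])
  finally have norm_bound: "norm (\<phi> x *\<^sub>R grad \<psi> x + \<psi> x *\<^sub>R grad \<phi> x) \<le> B1 * G2 + B2 * G1"
    for x .
  have "\<bar>\<phi> x * \<psi> x\<bar> \<le> B1 * B2" for x
    unfolding abs_mult by (intro mult_mono B1 B2) (auto intro: order_trans[OF abs_ge_zero B1])
  from C1bI[OF deriv cont norm_bound this] show "C1b (\<lambda>x. \<phi> x * \<psi> x)"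
    and "grad (\<lambda>x. \<phi> x * \<psi> x) = (\<lambda>x. \<phi> x *\<^sub>R grad \<psi> x + \<psi> x *\<^sub>R grad \<phi> x)" .
qed

lemma C1b_add:
  assumes "C1b \<phi>" "C1b \<psi>"
  shows "C1b (\<lambda>x. \<phi> x + \<psi> x)"
proof -
  obtain B1 B2 G1 G2 where B1: "\<And>x. \<bar>\<phi> x\<bar> \<le> B1" and B2: "\<And>x. \<bar>\<psi> x\<bar> \<le> B2"
    and G1: "\<And>x. norm (grad \<phi> x) \<le> G1" and G2: "\<And>x. norm (grad \<psi> x) \<le> G2"
    using assms C1b_bounded C1b_grad_bounded by metis
  show ?thesis
  proof (rule C1bI(1))
    show "((\<lambda>x. \<phi> x + \<psi> x) has_derivative (\<lambda>z. (grad \<phi> x + grad \<psi> x) \<bullet> z)) (at x)" for x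
      using has_derivative_add[OF C1b_has_derivative[OF assms(1)] C1b_has_derivative[OF assms(2)]]
      by (simp add: inner_add_left)
    show "continuous_on UNIV (\<lambda>x. grad \<phi> x + grad \<psi> x)"
      using assms unfolding C1b_def by (intro continuous_intros) auto
    show "norm (grad \<phi> x + grad \<psi> x) \<le> G1 + G2" for x
      by (meson G1 G2 add_mono norm_triangle_ineq order_trans)
    show "\<bar>\<phi> x + \<psi> x\<bar> \<le> B1 + B2" for x
      by (meson B1 B2 abs_triangle_ineq add_mono order_trans)
  qed
qed

lemma C1b_sum:
  assumes "\<And>i. i \<in> S \<Longrightarrow> C1b (\<psi> i)"
  shows "C1b (\<lambda>x. \<Sum>i\<in>S. \<psi> i x)"
  using assms by (induction S rule: infinite_finite_induct) (auto simp: C1b_const C1b_add)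

lemma C2b_grad_inner_C1b:
  assumes "C2b \<phi>"
  shows "C1b (\<lambda>x. grad \<phi> x \<bullet> z)"
proof -
  have "(\<lambda>x. grad \<phi> x \<bullet> z) = (\<lambda>x. \<Sum>i\<in>Basis. (z \<bullet> i) * (grad \<phi> x \<bullet> i))"
    by (rule ext, subst euclidean_inner) (simp add: mult.commute)
  moreover have "C1b (\<lambda>x. (z \<bullet> i) * (grad \<phi> x \<bullet> i))" if "i \<in> Basis" for i
    using assms that C1b_mult(1)[OF C1b_const] unfolding C2b_def by blast
  ultimately show ?thesis by (simp add: C1b_sum)
qed

lemma divergence_sum_scaleR:
  assumes "\<And>h. h \<in> S \<Longrightarrow> C1b (f h)"
  shows "divergence (\<lambda>x. \<Sum>h\<in>S. f h x *\<^sub>R e h) x = (\<Sum>h\<in>S. grad (f h) x \<bullet> e h)"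
proof -
  have "((\<lambda>x. \<Sum>h\<in>S. f h x *\<^sub>R e h) has_derivative
          (\<lambda>z. \<Sum>h\<in>S. (grad (f h) x \<bullet> z) *\<^sub>R e h)) (at x)"
    using assms by (intro has_derivative_sum has_derivative_scaleR_left C1b_has_derivative)
  then have "divergence (\<lambda>x. \<Sum>h\<in>S. f h x *\<^sub>R e h) x
      = (\<Sum>i\<in>Basis. \<Sum>h\<in>S. (grad (f h) x \<bullet> i) * (e h \<bullet> i))"
    unfolding divergence_def by (simp add: frechet_derivative_at[symmetric] inner_sum_left)
  also have "\<dots> = (\<Sum>h\<in>S. grad (f h) x \<bullet> e h)"
    by (subst sum.swap) (simp only: euclidean_inner[symmetric])
  finally show ?thesis .
qed

lemma orthonormal_family_expand:
  fixes e :: "nat \<Rightarrow> 'a::euclidean_space"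
  assumes onb: "\<forall>i\<in>{1..DIM('a)}. \<forall>j\<in>{1..DIM('a)}. e i \<bullet> e j = (if i = j then 1 else 0)"
  shows "x = (\<Sum>h=1..DIM('a). (x \<bullet> e h) *\<^sub>R e h)"
proof -
  let ?E = "e ` {1..DIM('a)}"
  have inj: "inj_on e {1..DIM('a)}"
    using onb by (intro inj_onI) (metis one_neq_zero)
  have orth: "pairwise orthogonal ?E"
    unfolding pairwise_def orthogonal_def using onb by fastforce
  have "independent ?E"
    using onb by (intro pairwise_orthogonal_independent[OF orth]) force
  moreover have "card ?E = DIM('a)" using card_image[OF inj] by simp
  ultimately have "dim ?E = DIM('a)" by (simp add: dim_eq_card_independent)
  then have "x \<in> span ?E" using dim_eq_full by blast
  moreover have "\<And>u. u \<in> ?E \<Longrightarrow> norm u = 1"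
    using onb by (auto simp: norm_eq_1)
  ultimately have "(\<Sum>u\<in>?E. (x \<bullet> u) *\<^sub>R u) = x"
    using orthonormal_basis_expand[OF orth] by blast
  then show ?thesis
    using sum.reindex[OF inj, of "\<lambda>u. (x \<bullet> u) *\<^sub>R u"] by simp
qed

lemma abs_add_powr_le:
  fixes a b q :: real
  assumes "q \<ge> 0"
  shows "\<bar>a + b\<bar> powr q \<le> 2 powr q * (\<bar>a\<bar> powr q + \<bar>b\<bar> powr q)"
proof -
  have "\<bar>a + b\<bar> powr q \<le> (2 * max \<bar>a\<bar> \<bar>b\<bar>) powr q"
    using assms by (intro powr_mono2) auto
  also have "\<dots> = 2 powr q * max \<bar>a\<bar> \<bar>b\<bar> powr q"
    by (simp add: powr_mult)
  also have "\<dots> \<le> 2 powr q * (\<bar>a\<bar> powr q + \<bar>b\<bar> powr q)"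
    by (intro mult_left_mono) (auto simp: max_def)
  finally show ?thesis .
qed

lemma integrable_dominated:
  fixes f :: "'b \<Rightarrow> 'c::{banach,second_countable_topology}"
  assumes "integrable M g" "f \<in> borel_measurable M" "\<And>x. norm (f x) \<le> g x"
  shows "integrable M f"
proof (rule Bochner_Integration.integrable_bound[OF assms(1,2)])
  show "AE x in M. norm (f x) \<le> norm (g x)"
    using assms(3) by (intro AE_I2) (metis abs_ge_self order_trans real_norm_def)
qed

lemma in_Lq_bounded:
  fixes F :: "'b \<Rightarrow> 'c::{banach,second_countable_topology}"
  assumes "finite_measure M" "F \<in> borel_measurable M" "\<And>x. norm (F x) \<le> B" "q \<ge> 0"
  shows "in_Lq M q F"
  unfolding in_Lq_def
proof
  show "integrable M (\<lambda>x. norm (F x) powr q)"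
    using assms by (intro finite_measure.integrable_const_bound[where B="B powr q"] AE_I2)
      (auto simp: powr_mono2)
qed fact

lemma in_Lq_mult_bounded:
  fixes w g :: "'b \<Rightarrow> real"
  assumes "in_Lq M q w" "g \<in> borel_measurable M" "\<And>x. \<bar>g x\<bar> \<le> B" "q \<ge> 0"
  shows "in_Lq M q (\<lambda>x. w x * g x)"
  unfolding in_Lq_def
proof
  have w: "w \<in> borel_measurable M" "integrable M (\<lambda>x. norm (w x) powr q)"
    using assms(1) unfolding in_Lq_def by auto
  show "(\<lambda>x. w x * g x) \<in> borel_measurable M" using w assms(2) by measurable
  have "norm (w x * g x) powr q = \<bar>g x\<bar> powr q * norm (w x) powr q" for x
    by (simp add: abs_mult powr_mult mult.commute)
  also have "\<dots> x \<le> B powr q * norm (w x) powr q" for x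
    using assms(3,4) by (intro mult_right_mono powr_mono2) auto
  finally have "norm (norm (w x * g x) powr q) \<le> B powr q * norm (w x) powr q" for x
    by simp
  moreover have "(\<lambda>x. norm (w x * g x) powr q) \<in> borel_measurable M"
    using w assms(2) by measurable
  ultimately show "integrable M (\<lambda>x. norm (w x * g x) powr q)"
    using integrable_dominated[OF integrable_mult_right[OF w(2)]] by blast
qed

lemma in_Lq_add:
  fixes a b :: "'b \<Rightarrow> real"
  assumes "in_Lq M q a" "in_Lq M q b" "q \<ge> 0"
  shows "in_Lq M q (\<lambda>x. a x + b x)"
  unfolding in_Lq_def
proof
  have m: "a \<in> borel_measurable M" "b \<in> borel_measurable M"
    and i: "integrable M (\<lambda>x. \<bar>a x\<bar> powr q + \<bar>b x\<bar> powr q)"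
    using assms unfolding in_Lq_def by auto
  show meas: "(\<lambda>x. a x + b x) \<in> borel_measurable M" using m by measurable
  have "norm (norm (a x + b x) powr q) \<le> 2 powr q * (\<bar>a x\<bar> powr q + \<bar>b x\<bar> powr q)" for x
    using abs_add_powr_le[OF assms(3)] by simp
  moreover have "(\<lambda>x. norm (a x + b x) powr q) \<in> borel_measurable M"
    using meas by measurable
  ultimately show "integrable M (\<lambda>x. norm (a x + b x) powr q)"
    using integrable_dominated[OF integrable_mult_right[OF i]] by blast
qed

lemma in_Lq_uminus: "in_Lq M q a \<Longrightarrow> in_Lq M q (\<lambda>x. - a x :: real)"
  unfolding in_Lq_def by auto

lemma in_Lq_sum:
  fixes a :: "'i \<Rightarrow> 'b \<Rightarrow> real"
  assumes "finite S" "\<And>k. k \<in> S \<Longrightarrow> in_Lq M q (a k)" "q \<ge> 0"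
  shows "in_Lq M q (\<lambda>x. \<Sum>k\<in>S. a k x)"
  using assms
proof (induction S rule: finite_induct)
  case empty
  then show ?case by (simp add: in_Lq_def)
next
  case (insert k S)
  then show ?case by (simp add: in_Lq_add)
qed

definition bounded_continuous :: "('a::topological_space \<Rightarrow> real) \<Rightarrow> bool" where
  "bounded_continuous g \<longleftrightarrow> continuous_on UNIV g \<and> (\<exists>B. \<forall>x. \<bar>g x\<bar> \<le> B)"

lemma bounded_continuous_C1b: "C1b \<psi> \<Longrightarrow> bounded_continuous \<psi>"
  unfolding bounded_continuous_def using C1b_continuous_on C1b_bounded by blast

lemma bounded_continuous_grad_inner:
  assumes "C1b \<psi>"
  shows "bounded_continuous (\<lambda>x. grad \<psi> x \<bullet> z)"
proof -
  obtain G where G: "\<And>x. norm (grad \<psi> x) \<le> G" using C1b_grad_bounded[OF assms] by blast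
  have "\<bar>grad \<psi> x \<bullet> z\<bar> \<le> G * norm z" for x
    by (meson G Cauchy_Schwarz_ineq2 mult_right_mono norm_ge_zero order_trans)
  moreover have "continuous_on UNIV (\<lambda>x. grad \<psi> x \<bullet> z)"
    using assms unfolding C1b_def by (intro continuous_intros) auto
  ultimately show ?thesis unfolding bounded_continuous_def by blast
qed

lemma bounded_continuous_mult:
  assumes "bounded_continuous f" "bounded_continuous g"
  shows "bounded_continuous (\<lambda>x. f x * g x)"
proof -
  obtain B1 B2 where B1: "\<And>x. \<bar>f x\<bar> \<le> B1" and B2: "\<And>x. \<bar>g x\<bar> \<le> B2"
    using assms unfolding bounded_continuous_def by blast
  have "\<bar>f x * g x\<bar> \<le> B1 * B2" for x
    unfolding abs_mult by (intro mult_mono B1 B2) (auto intro: order_trans[OF abs_ge_zero B1])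
  moreover have "continuous_on UNIV (\<lambda>x. f x * g x)"
    using assms unfolding bounded_continuous_def by (intro continuous_intros) auto
  ultimately show ?thesis unfolding bounded_continuous_def by blast
qed

lemma integrable_if_in_Lq_one:
  fixes f :: "'b \<Rightarrow> 'c::{banach,second_countable_topology}"
  shows "in_Lq M 1 f \<Longrightarrow> integrable M f"
  unfolding in_Lq_def using integrable_norm_iff by auto

locale gradient_integration_by_parts = prob_space \<nu>
  for \<nu> :: "'a::euclidean_space measure" and v :: "'a \<Rightarrow> 'a \<Rightarrow> real" +
  assumes sets_eq_borel: "sets \<nu> = sets borel"
    and v_in_Lq: "\<And>z r. r \<ge> 1 \<Longrightarrow> in_Lq \<nu> r (v z)"
    and integral_grad_inner: "\<And>z \<phi>. C1b \<phi> \<Longrightarrow> (\<integral>x. grad \<phi> x \<bullet> z \<partial>\<nu>) = (\<integral>x. v z x * \<phi> x \<partial>\<nu>)"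
begin

lemma borel_measurable_continuous_on:
  "continuous_on UNIV g \<Longrightarrow> g \<in> borel_measurable \<nu>"
  using borel_measurable_continuous_onI measurable_cong_sets[OF sets_eq_borel refl] by blast

lemma in_Lq_bounded_continuous:
  assumes "bounded_continuous g" "q \<ge> 0"
  shows "in_Lq \<nu> q g"
proof -
  obtain B where "\<And>x. \<bar>g x\<bar> \<le> B" using assms(1) unfolding bounded_continuous_def by blast
  moreover have "g \<in> borel_measurable \<nu>"
    using assms(1) borel_measurable_continuous_on unfolding bounded_continuous_def by blast
  ultimately show ?thesis
    using in_Lq_bounded[OF finite_measure_axioms, of g B q] assms(2) by simp
qed

lemma in_Lq_v_mult:
  assumes "bounded_continuous g" "q \<ge> 1"
  shows "in_Lq \<nu> q (\<lambda>x. v z x * g x)"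
proof -
  obtain B where B: "\<And>x. \<bar>g x\<bar> \<le> B" using assms(1) unfolding bounded_continuous_def by blast
  have "g \<in> borel_measurable \<nu>"
    using assms(1) borel_measurable_continuous_on unfolding bounded_continuous_def by blast
  from in_Lq_mult_bounded[OF v_in_Lq[OF assms(2)] this B] show ?thesis using assms(2) by simp
qed

lemma integrable_bounded_continuous: "bounded_continuous g \<Longrightarrow> integrable \<nu> g"
  by (simp add: in_Lq_bounded_continuous integrable_if_in_Lq_one)

lemma integrable_v_mult: "bounded_continuous g \<Longrightarrow> integrable \<nu> (\<lambda>x. v z x * g x)"
  by (simp add: in_Lq_v_mult integrable_if_in_Lq_one)

lemma integral_by_parts:
  assumes \<phi>: "C1b \<phi>" and f: "C1b f"
  shows "(\<integral>x. f x * (grad \<phi> x \<bullet> z) \<partial>\<nu>) = (\<integral>x. \<phi> x * (v z x * f x - grad f x \<bullet> z) \<partial>\<nu>)"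
proof -
  have int_\<phi>_df: "integrable \<nu> (\<lambda>x. \<phi> x * (grad f x \<bullet> z))"
    by (intro integrable_bounded_continuous bounded_continuous_mult bounded_continuous_C1b
        bounded_continuous_grad_inner \<phi> f)
  have int_f_d\<phi>: "integrable \<nu> (\<lambda>x. f x * (grad \<phi> x \<bullet> z))"
    by (intro integrable_bounded_continuous bounded_continuous_mult bounded_continuous_C1b
        bounded_continuous_grad_inner \<phi> f)
  have int_v\<phi>f: "integrable \<nu> (\<lambda>x. v z x * (\<phi> x * f x))"
    by (intro integrable_v_mult bounded_continuous_mult bounded_continuous_C1b \<phi> f)
  have "(\<integral>x. v z x * (\<phi> x * f x) \<partial>\<nu>) = (\<integral>x. grad (\<lambda>x. \<phi> x * f x) x \<bullet> z \<partial>\<nu>)"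
    using integral_grad_inner[OF C1b_mult(1)[OF \<phi> f]] by simp
  also have "\<dots> = (\<integral>x. \<phi> x * (grad f x \<bullet> z) + f x * (grad \<phi> x \<bullet> z) \<partial>\<nu>)"
    by (simp add: C1b_mult(2)[OF \<phi> f] inner_add_left)
  also have "\<dots> = (\<integral>x. \<phi> x * (grad f x \<bullet> z) \<partial>\<nu>) + (\<integral>x. f x * (grad \<phi> x \<bullet> z) \<partial>\<nu>)"
    using int_\<phi>_df int_f_d\<phi> by simp
  finally have "(\<integral>x. f x * (grad \<phi> x \<bullet> z) \<partial>\<nu>)
      = (\<integral>x. v z x * (\<phi> x * f x) \<partial>\<nu>) - (\<integral>x. \<phi> x * (grad f x \<bullet> z) \<partial>\<nu>)"
    by simp
  also have "\<dots> = (\<integral>x. v z x * (\<phi> x * f x) - \<phi> x * (grad f x \<bullet> z) \<partial>\<nu>)"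
    using int_v\<phi>f int_\<phi>_df by simp
  finally show ?thesis by (simp add: algebra_simps)
qed

context
  fixes S :: "'i set" and f :: "'i \<Rightarrow> 'a \<Rightarrow> real" and e :: "'i \<Rightarrow> 'a"
  assumes finite_S: "finite S" and f_C1b: "\<And>h. h \<in> S \<Longrightarrow> C1b (f h)"
begin

lemma in_Lq_sum_scaleR:
  assumes "q \<ge> 0"
  shows "in_Lq \<nu> q (\<lambda>x. \<Sum>h\<in>S. f h x *\<^sub>R e h)"
proof -
  have "\<forall>h\<in>S. \<exists>B. \<forall>x. \<bar>f h x\<bar> \<le> B" using f_C1b C1b_bounded by blast
  then obtain B where B: "\<And>h x. h \<in> S \<Longrightarrow> \<bar>f h x\<bar> \<le> B h"
    by metis
  have "norm (\<Sum>h\<in>S. f h x *\<^sub>R e h) \<le> (\<Sum>h\<in>S. B h * norm (e h))" for x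
    using B by (intro order_trans[OF norm_sum] sum_mono) (auto intro: mult_right_mono)
  moreover have "(\<lambda>x. \<Sum>h\<in>S. f h x *\<^sub>R e h) \<in> borel_measurable \<nu>"
    using f_C1b C1b_continuous_on
    by (intro borel_measurable_continuous_on continuous_intros) auto
  ultimately show ?thesis
    using in_Lq_bounded[OF finite_measure_axioms] assms by blast
qed

lemma in_Lq_v_mult_minus_grad:
  assumes "q \<ge> 1"
  shows "in_Lq \<nu> q (\<lambda>x. \<Sum>h\<in>S. v (e h) x * f h x - grad (f h) x \<bullet> e h)"
proof (rule in_Lq_sum[OF finite_S])
  fix h assume h: "h \<in> S"
  have "in_Lq \<nu> q (\<lambda>x. v (e h) x * f h x)"
    by (intro in_Lq_v_mult bounded_continuous_C1b f_C1b h assms)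
  moreover have "in_Lq \<nu> q (\<lambda>x. - (grad (f h) x \<bullet> e h))"
    using assms
    by (intro in_Lq_uminus in_Lq_bounded_continuous bounded_continuous_grad_inner f_C1b h) simp
  ultimately show "in_Lq \<nu> q (\<lambda>x. v (e h) x * f h x - grad (f h) x \<bullet> e h)"
    using in_Lq_add[of \<nu> q "\<lambda>x. v (e h) x * f h x" "\<lambda>x. - (grad (f h) x \<bullet> e h)"] assms
    by simp
qed (use assms in simp)

lemma integral_grad_inner_sum_scaleR:
  assumes \<phi>: "C1b \<phi>"
  shows "(\<integral>x. grad \<phi> x \<bullet> (\<Sum>h\<in>S. f h x *\<^sub>R e h) \<partial>\<nu>)
       = (\<integral>x. \<phi> x * (\<Sum>h\<in>S. v (e h) x * f h x - grad (f h) x \<bullet> e h) \<partial>\<nu>)"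
proof -
  have int_lhs: "integrable \<nu> (\<lambda>x. f h x * (grad \<phi> x \<bullet> e h))" if "h \<in> S" for h
    using that by (intro integrable_bounded_continuous bounded_continuous_mult
        bounded_continuous_C1b bounded_continuous_grad_inner \<phi> f_C1b)
  have int_rhs: "integrable \<nu> (\<lambda>x. \<phi> x * (v (e h) x * f h x - grad (f h) x \<bullet> e h))"
    if h: "h \<in> S" for h
  proof -
    have "integrable \<nu> (\<lambda>x. v (e h) x * (\<phi> x * f h x) - \<phi> x * (grad (f h) x \<bullet> e h))"
      by (intro Bochner_Integration.integrable_diff integrable_v_mult integrable_bounded_continuous
          bounded_continuous_mult bounded_continuous_C1b bounded_continuous_grad_inner \<phi> f_C1b h)
    then show ?thesis by (simp add: algebra_simps)
  qed
  have "(\<integral>x. grad \<phi> x \<bullet> (\<Sum>h\<in>S. f h x *\<^sub>R e h) \<partial>\<nu>)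
      = (\<Sum>h\<in>S. \<integral>x. f h x * (grad \<phi> x \<bullet> e h) \<partial>\<nu>)"
    using int_lhs by (simp add: inner_sum_right mult.commute)
  also have "\<dots> = (\<Sum>h\<in>S. \<integral>x. \<phi> x * (v (e h) x * f h x - grad (f h) x \<bullet> e h) \<partial>\<nu>)"
    by (intro sum.cong refl integral_by_parts \<phi> f_C1b)
  also have "\<dots> = (\<integral>x. \<phi> x * (\<Sum>h\<in>S. v (e h) x * f h x - grad (f h) x \<bullet> e h) \<partial>\<nu>)"
    using int_rhs by (simp add: sum_distrib_left)
  finally show ?thesis .
qed

lemma adjoint_grad_sum_scaleR:
  assumes "q \<ge> 1"
  shows "adjoint_grad \<nu> q (\<lambda>x. \<Sum>h\<in>S. f h x *\<^sub>R e h)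
           (\<lambda>x. - divergence (\<lambda>x. \<Sum>h\<in>S. f h x *\<^sub>R e h) x + (\<Sum>h\<in>S. v (e h) x * f h x))"
proof -
  have adjoint_eq: "(\<lambda>x. - divergence (\<lambda>x. \<Sum>h\<in>S. f h x *\<^sub>R e h) x + (\<Sum>h\<in>S. v (e h) x * f h x))
      = (\<lambda>x. \<Sum>h\<in>S. v (e h) x * f h x - grad (f h) x \<bullet> e h)"
    by (simp add: divergence_sum_scaleR f_C1b sum_subtractf)
  show ?thesis
    unfolding adjoint_grad_def adjoint_eq using assms
    by (intro conjI allI impI in_Lq_sum_scaleR in_Lq_v_mult_minus_grad integral_grad_inner_sum_scaleR)
      simp_all
qed

end

lemma adjoint_grad_grad:
  fixes e :: "nat \<Rightarrow> 'a"
  assumes onb: "\<forall>i\<in>{1..DIM('a)}. \<forall>j\<in>{1..DIM('a)}. e i \<bullet> e j = (if i = j then 1 else 0)"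
    and "C2b \<phi>" "q \<ge> 1"
  shows "adjoint_grad \<nu> q (grad \<phi>)
      (\<lambda>x. - laplacian \<phi> x + (\<Sum>h=1..DIM('a). v (e h) x * (grad \<phi> x \<bullet> e h)))"
proof -
  have expand: "(\<lambda>x. \<Sum>h=1..DIM('a). (grad \<phi> x \<bullet> e h) *\<^sub>R e h) = grad \<phi>"
    using orthonormal_family_expand[OF onb] by (rule ext[symmetric])
  show ?thesis
    using adjoint_grad_sum_scaleR[where S="{1..DIM('a)}" and e=e and f="\<lambda>h x. grad \<phi> x \<bullet> e h",
        OF _ C2b_grad_inner_C1b[OF assms(2)] assms(3)]
    unfolding expand laplacian_def by simp
qed

end

theorem proposition3p7:
  fixes b :: "'a::euclidean_space \<Rightarrow> 'a"
    and b' :: "'a \<Rightarrow> 'a \<Rightarrow>\<^sub>L 'a"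
    and \<omega> a K :: real and N :: nat
    and M :: "'w measure" and W :: "real \<Rightarrow> 'w \<Rightarrow> 'a" and X :: "'a \<Rightarrow> real \<Rightarrow> 'w \<Rightarrow> 'a"
    and \<nu> :: "'a measure"
    and e :: "nat \<Rightarrow> 'a"
    and v :: "'a \<Rightarrow> 'a \<Rightarrow> real"
    and p q :: real
    and f :: "nat \<Rightarrow> 'a \<Rightarrow> real"
    and F :: "'a \<Rightarrow> 'a"
  assumes b_C1: "\<And>x. (b has_derivative blinfun_apply (b' x)) (at x)" "continuous_on UNIV b'"
    and \<omega>_pos: "\<omega> > 0" and a_nonneg: "a \<ge> 0" and K_pos: "K > 0"
    and dissip: "\<And>x. b x \<bullet> x \<le> - \<omega> * (norm x)\<^sup>2 + a"
    and growth: "\<And>x. norm (b x) + norm (b' x) \<le> K * (1 + norm x ^ (2 * N))"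
    and BM: "brownian_motion M W"
    and sol: "sde_solution M b W X"
    and inv: "invariant_measure M X \<nu>"
    and onb: "\<forall>i\<in>{1..DIM('a)}. \<forall>j\<in>{1..DIM('a)}. e i \<bullet> e j = (if i = j then 1 else 0)"
    and v_L1: "\<And>z. integrable \<nu> (v z)"
    and v_ibp: "\<And>z \<phi>. C1b \<phi> \<Longrightarrow> (\<integral>x. grad \<phi> x \<bullet> z \<partial>\<nu>) = (\<integral>x. v z x * \<phi> x \<partial>\<nu>)"
    and v_Lr: "\<And>z r. r \<ge> 1 \<Longrightarrow> in_Lq \<nu> r (v z)"
    and p_gt1: "p > 1" and q_def: "q = p / (p - 1)"
    and f_C1b: "\<And>h. h \<in> {1..DIM('a)} \<Longrightarrow> C1b (f h)"
    and F_def: "\<And>x. F x = (\<Sum>h=1..DIM('a). f h x *\<^sub>R e h)"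
  shows "adjoint_grad \<nu> q F
           (\<lambda>x. - divergence F x + (\<Sum>h=1..DIM('a). v (e h) x * f h x))
       \<and> (\<forall>\<phi>. C2b \<phi> \<longrightarrow>
           (\<exists>g. adjoint_grad \<nu> q (grad \<phi>) g \<and>
              (AE x in \<nu>. - (1/2) * g x
                 = (1/2) * laplacian \<phi> x - (1/2) * (\<Sum>h=1..DIM('a). v (e h) x * (grad \<phi> x \<bullet> e h)))))"
proof -
  have "prob_space \<nu>" "sets \<nu> = sets borel"
    using inv unfolding invariant_measure_def by auto
  then interpret gradient_integration_by_parts \<nu> v
    using v_Lr v_ibp
    by (intro gradient_integration_by_parts.intro gradient_integration_by_parts_axioms.intro)
  have q: "q \<ge> 1" using p_gt1 unfolding q_def by (simp add: field_simps)
  have "F = (\<lambda>x. \<Sum>h=1..DIM('a). f h x *\<^sub>R e h)" using F_def by blast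
  then have adjoint_F: "adjoint_grad \<nu> q F
      (\<lambda>x. - divergence F x + (\<Sum>h=1..DIM('a). v (e h) x * f h x))"
    using adjoint_grad_sum_scaleR[where S="{1..DIM('a)}" and e=e, OF _ f_C1b q] by simp
  show ?thesis
  proof (intro conjI adjoint_F allI impI exI)
    fix \<phi> :: "'a \<Rightarrow> real" assume "C2b \<phi>"
    then show "adjoint_grad \<nu> q (grad \<phi>)
      (\<lambda>x. - laplacian \<phi> x + (\<Sum>h=1..DIM('a). v (e h) x * (grad \<phi> x \<bullet> e h)))"
      using adjoint_grad_grad[OF onb _ q] by blast
  qed (simp add: algebra_simps)
qed

end
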